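(* Let $F$ be the elementary cellular automaton with rule number 184. Then $D(\textsc{Pred}_{F,n})=\Theta(\log n)$: there is a protocol using $O(\log n)$ bits, and no protocol uses asymptotically fewer.
   Context: An elementary cellular automaton (ECA) with rule number $N\in\{0,\dots,255\}$ is the map $F:\{0,1\}^{\mathbb Z}\to\{0,1\}^{\mathbb Z}$ given by $F(x)_i=f(x_{i-1},x_i,x_{i+1})$. Here the local rule $f:\{0,1\}^3\to\{0,1\}$ is determined by $N=\sum_{a,b,c\in\{0,1\}}2^{4a+2b+c}f(a,b,c)$. On a finite word of length $m\ge 3$, $F$ produces the word of length $m-2$ obtained by applying $f$ at every position whose full neighbourhood lies in the word. For $n\ge1$, $\textsc{Pred}_{F,n}:\{0,1\}^{2n+1}\to\{0,1\}$ maps a word $x=x_{-n}\cdots x_n$ to the single letter of $F^n(x)$, i.e. the state of the central cell after $n$ steps. For a function $g:X\times Y\to Z$, $D(g)$ is the minimal depth of a deterministic two-party protocol computing $g$. In such a protocol, Alice knows $x$ and Bob knows $y$. The protocol is a binary tree: each internal node is labelled by a function of Alice's input only or of Bob's input only, with values in $\{\text{left},\text{right}\}$, and each leaf is labelled by an output value. For $g:\{0,1\}^m\to Z$, set $D(g)=\max_{0\le i<m}D(g_i)$, where $g_i:\{0,1\}^i\times\{0,1\}^{m-i}\to Z$ is $g_i(x,y)=g(xy)$. *)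

theory Defs
  imports Complex_Main "HOL-Library.Landau_Symbols"
begin

text \<open>Words over {0,1} are represented as lists of booleans (True = 1).
  Local rule of ECA number N: f(a,b,c) is bit number 4a+2b+c of N.\<close>

definition eca_local :: "nat \<Rightarrow> bool \<Rightarrow> bool \<Rightarrow> bool \<Rightarrow> bool" where
  "eca_local N a b c = odd (N div 2 ^ (4 * of_bool a + 2 * of_bool b + of_bool c))"

definition eca_step :: "nat \<Rightarrow> bool list \<Rightarrow> bool list" where
  "eca_step N w = map (\<lambda>i. eca_local N (w ! i) (w ! (i+1)) (w ! (i+2))) [0..<length w - 2]"

text \<open>Pred_{F,n}: on a word of length 2n+1, the single letter of F^n(x).\<close>

definition pred_eca :: "nat \<Rightarrow> nat \<Rightarrow> bool list \<Rightarrow> bool" where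
  "pred_eca N n w = hd ((eca_step N ^^ n) w)"

datatype ('x, 'y, 'z) protocol =
    Leaf 'z
  | NodeA "'x \<Rightarrow> bool" "('x, 'y, 'z) protocol" "('x, 'y, 'z) protocol"
  | NodeB "'y \<Rightarrow> bool" "('x, 'y, 'z) protocol" "('x, 'y, 'z) protocol"

fun run_protocol :: "('x, 'y, 'z) protocol \<Rightarrow> 'x \<Rightarrow> 'y \<Rightarrow> 'z" where
  "run_protocol (Leaf z) x y = z"
| "run_protocol (NodeA f l r) x y = (if f x then run_protocol r x y else run_protocol l x y)"
| "run_protocol (NodeB g l r) x y = (if g y then run_protocol r x y else run_protocol l x y)"

fun depth :: "('x, 'y, 'z) protocol \<Rightarrow> nat" where
  "depth (Leaf z) = 0"
| "depth (NodeA f l r) = Suc (max (depth l) (depth r))"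
| "depth (NodeB g l r) = Suc (max (depth l) (depth r))"

definition computes :: "('x, 'y, 'z) protocol \<Rightarrow> ('x \<Rightarrow> 'y \<Rightarrow> 'z) \<Rightarrow> 'x set \<Rightarrow> 'y set \<Rightarrow> bool" where
  "computes P g X Y \<longleftrightarrow> (\<forall>x\<in>X. \<forall>y\<in>Y. run_protocol P x y = g x y)"

definition cc :: "('x \<Rightarrow> 'y \<Rightarrow> 'z) \<Rightarrow> 'x set \<Rightarrow> 'y set \<Rightarrow> nat" where
  "cc g X Y = (LEAST d. \<exists>P :: ('x, 'y, 'z) protocol. computes P g X Y \<and> depth P = d)"

definition cc_word :: "(bool list \<Rightarrow> 'z) \<Rightarrow> nat \<Rightarrow> nat" where
  "cc_word g m = Max ((\<lambda>i. cc (\<lambda>x y. g (x @ y)) {x. length x = i} {y. length y = m - i}) ` {0..<m})"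

end

theory Submission
  imports Defs "HOL-Real_Asymp.Real_Asymp"
begin

(* Rule 184 is the traffic rule: a car (a 1) moves one step to the right iff the cell
   ahead of it is free.  Everything rests on an explicit formula for the centre cell.
   With ones_from w p the number of ones of w at positions >= p, one step of rule 184
   maps suffix counts to  min (ones_from w q) (ones_from w (q+2) + 1)  up to an additive
   constant (capped_count).  Iterating, after n steps the centre cell is a one iff
   min_shift n w 0 - min_shift n w 1 = 1, where min_shift t w q is the min-plus
   expression  min_{k<=t} (ones_from w (q+2k) + k)  (pred_184_min_shift).
   Upper bound: at a cut w = x @ y, min_shift splits as min (left_min x + ones_from y 0)
   (right_min y) with left_min in [0, 2n+1]; Alice sends left_min for q = 0, 1 in
   O(log n) bits and Bob answers (pred_184_cut_protocol).
   Lower bound: the pairs 0^(n-a) 1^a | 1^(n+1-2b) 0^(2b), 1 <= a, b <= n/2, give centre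
   cell (b <= a); this triangular fooling set forces 2^depth >= n/2 at the middle cut. *)


subsection \<open>Suffix counts of words\<close>

(* Number of ones of w at positions p, p+1, ...; it determines w and behaves
   well under rule 184. *)
definition ones_from :: "bool list \<Rightarrow> nat \<Rightarrow> int" where
  "ones_from w p = (\<Sum>j\<in>{p..<length w}. of_bool (w ! j))"

lemma ones_from_unfold: "p < length w \<Longrightarrow> ones_from w p = of_bool (w ! p) + ones_from w (Suc p)"
  unfolding ones_from_def by (rule sum.atLeast_Suc_lessThan)

lemma ones_from_beyond: "length w \<le> p \<Longrightarrow> ones_from w p = 0"
  unfolding ones_from_def by simp

lemma ones_from_nonneg: "0 \<le> ones_from w p"
  unfolding ones_from_def by (rule sum_nonneg) simp

lemma ones_from_le_length: "ones_from w p \<le> int (length w)"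
proof -
  have "ones_from w p \<le> (\<Sum>j\<in>{p..<length w}. 1)"
    unfolding ones_from_def by (rule sum_mono) simp
  also have "\<dots> \<le> int (length w)" by simp
  finally show ?thesis .
qed

lemma ones_from_append:
  "ones_from (x @ y) p = (if p < length x then ones_from x p + ones_from y 0 else ones_from y (p - length x))"
proof -
  have split: "{p..<length x + length y} = {p..<length x} \<union> {max p (length x)..<length x + length y}"
    by auto
  have shift: "(\<Sum>j\<in>{max p (length x)..<length x + length y}. of_bool ((x @ y) ! j) :: int)
      = ones_from y (p - length x)"
    unfolding ones_from_def
    by (rule sum.reindex_bij_witness[of _ "\<lambda>j. j + length x" "\<lambda>j. j - length x"])
       (auto simp: nth_append)
  have left: "(\<Sum>j\<in>{p..<length x}. of_bool ((x @ y) ! j) :: int) = ones_from x p"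
    unfolding ones_from_def by (rule sum.cong) (auto simp: nth_append)
  have "ones_from (x @ y) p = ones_from x p + ones_from y (p - length x)"
    unfolding ones_from_def length_append split
    by (subst sum.union_disjoint) (auto simp: left[unfolded ones_from_def] shift[unfolded ones_from_def])
  then show ?thesis by (simp add: ones_from_beyond)
qed



subsection \<open>One step of rule 184 on suffix counts\<close>

(* f(a,b,c) = (if b then c else a): an occupied cell keeps its car iff the car is blocked,
   an empty cell receives the car from its left neighbour. *)
lemma eca_local_184: "eca_local 184 a b c = (if b then c else a)"
  by (cases a; cases b; cases c) (simp_all add: eca_local_def)

lemma length_eca_step: "length (eca_step N w) = length w - 2"
  by (simp add: eca_step_def)

lemma length_eca_iter: "length ((eca_step N ^^ t) w) = length w - 2 * t"
  by (induction t) (simp_all add: length_eca_step)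

(* The suffix count at q after one step, up to the additive constant
   capped_count w (length w - 2): a suffix gains at most one car per step and cannot
   hold more than the cars already in it or entering from the cell just before it. *)
definition capped_count :: "bool list \<Rightarrow> nat \<Rightarrow> int" where
  "capped_count w q = min (ones_from w q) (ones_from w (q + 2) + 1)"

lemma ones_from_step_184:
  assumes "q \<le> length w - 2"
  shows "ones_from (eca_step 184 w) q = capped_count w q - capped_count w (length w - 2)"
  using assms
proof (induction q rule: inc_induct)
  case base
  then show ?case by (simp add: ones_from_beyond length_eca_step)
next
  case (step q)
  then have q3: "q + 3 \<le> length w" by simp
  (* the increment of capped_count between q and q+1 is exactly the new cell q *)
  have cell: "eca_step 184 w ! q = (if w ! (q+1) then w ! (q+2) else w ! q)"
    using q3 by (simp add: eca_step_def eca_local_184)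
  have s0: "ones_from w q = of_bool (w ! q) + ones_from w (q+1)"
    and s1: "ones_from w (q+1) = of_bool (w ! (q+1)) + ones_from w (q+2)"
    and s2: "ones_from w (q+2) = of_bool (w ! (q+2)) + ones_from w (q+3)"
    using q3 ones_from_unfold[of q w] ones_from_unfold[of "q+1" w] ones_from_unfold[of "q+2" w]
    by (simp_all add: numeral_eq_Suc)
  have "capped_count w q - capped_count w (Suc q) = of_bool (eca_step 184 w ! q)"
    unfolding capped_count_def cell using s0 s1 s2
    by (cases "w ! q"; cases "w ! (q+1)"; cases "w ! (q+2)") (simp_all add: numeral_eq_Suc)
  moreover have "ones_from (eca_step 184 w) q
      = of_bool (eca_step 184 w ! q) + ones_from (eca_step 184 w) (Suc q)"
    using q3 by (intro ones_from_unfold) (simp add: length_eca_step)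
  ultimately show ?case using step.IH by simp
qed


subsection \<open>The centre cell after n steps as a min-plus expression\<close>

(* min_shift t w q = min over k <= t of (ones_from w (q + 2k) + k); iterating the
   one-step formula t times produces exactly this quantity. *)
fun min_shift :: "nat \<Rightarrow> bool list \<Rightarrow> nat \<Rightarrow> int" where
  "min_shift 0 w q = ones_from w q"
| "min_shift (Suc t) w q = min (ones_from w q) (min_shift t w (q + 2) + 1)"

lemma min_shift_le_ones_from: "min_shift t w q \<le> ones_from w q"
  by (cases t) auto

lemma min_shift_le: "k \<le> t \<Longrightarrow> min_shift t w q \<le> ones_from w (q + 2 * k) + int k"
proof (induction t arbitrary: q k)
  case 0
  then show ?case by simp
next
  case (Suc t)
  show ?case
  proof (cases k)
    case 0
    then show ?thesis using min_shift_le_ones_from[of "Suc t" w q] by simp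
  next
    case (Suc k')
    then have "min_shift t w (q + 2) \<le> ones_from w (q + 2 + 2 * k') + int k'"
      using Suc.IH[of k' "q + 2"] Suc.prems by simp
    then show ?thesis using Suc by (simp add: algebra_simps)
  qed
qed

lemma min_shift_attained: "\<exists>k\<le>t. min_shift t w q = ones_from w (q + 2 * k) + int k"
proof (induction t arbitrary: q)
  case 0
  then show ?case by simp
next
  case (Suc t)
  obtain k where k: "k \<le> t" "min_shift t w (q + 2) = ones_from w (q + 2 + 2 * k) + int k"
    using Suc.IH by blast
  show ?case
  proof (cases "ones_from w q \<le> min_shift t w (q + 2) + 1")
    case True
    then show ?thesis by (intro exI[of _ 0]) simp
  next
    case False
    then show ?thesis using k by (intro exI[of _ "Suc k"]) (simp add: algebra_simps)
  qed
qed

lemma min_shift_eqI: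
  assumes "\<And>k. k \<le> t \<Longrightarrow> v \<le> ones_from w (q + 2 * k) + int k"
    and "kmin \<le> t" and "ones_from w (q + 2 * kmin) + int kmin = v"
  shows "min_shift t w q = v"
  using assms min_shift_le[OF assms(2), of w q] min_shift_attained[of t w q] by force

lemma min_shift_step_184:
  assumes "q + 2 * t + 2 \<le> length w"
  shows "min_shift t (eca_step 184 w) q = min_shift (Suc t) w q - capped_count w (length w - 2)"
  using assms
proof (induction t arbitrary: q)
  case 0
  then show ?case by (simp add: ones_from_step_184 capped_count_def)
next
  case (Suc t)
  have "ones_from (eca_step 184 w) q = capped_count w q - capped_count w (length w - 2)"
    using Suc.prems by (intro ones_from_step_184) simp
  moreover have "min_shift t (eca_step 184 w) (q + 2)
      = min_shift (Suc t) w (q + 2) - capped_count w (length w - 2)"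
    using Suc.prems by (intro Suc.IH) simp
  moreover have "min_shift (Suc t) w (q + 2) \<le> ones_from w (q + 2)"
    by (rule min_shift_le_ones_from)
  ultimately show ?case unfolding capped_count_def by simp linarith
qed

(* After t steps, differences of suffix counts are differences of min_shift values;
   the unknown additive constants of the individual steps cancel. *)
lemma ones_from_iter_184:
  assumes "q \<le> length w - 2 * t" and "q' \<le> length w - 2 * t"
  shows "ones_from ((eca_step 184 ^^ t) w) q - ones_from ((eca_step 184 ^^ t) w) q'
       = min_shift t w q - min_shift t w q'"
  using assms
proof (induction t arbitrary: w)
  case 0
  then show ?case by simp
next
  case (Suc t)
  show ?case
  proof (cases "length w \<le> 2 * Suc t")
    case True
    then show ?thesis using Suc.prems by simp
  next
    case False
    have "(eca_step 184 ^^ Suc t) w = (eca_step 184 ^^ t) (eca_step 184 w)"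
      by (simp add: funpow_Suc_right del: funpow.simps)
    moreover have "min_shift t (eca_step 184 w) p = min_shift (Suc t) w p - capped_count w (length w - 2)"
      if "p \<le> length w - 2 * Suc t" for p
      using that False by (intro min_shift_step_184) simp
    ultimately show ?thesis
      using Suc.prems False Suc.IH[of "eca_step 184 w"] by (simp add: length_eca_step)
  qed
qed

lemma pred_184_min_shift:
  assumes "length w = 2 * n + 1"
  shows "pred_eca 184 n w \<longleftrightarrow> min_shift n w 0 - min_shift n w 1 = 1"
proof -
  define v where "v = (eca_step 184 ^^ n) w"
  have len: "length v = 1" using assms by (simp add: v_def length_eca_iter)
  have "ones_from v 0 - ones_from v 1 = min_shift n w 0 - min_shift n w 1"
    unfolding v_def using assms by (intro ones_from_iter_184) simp_all
  moreover have "ones_from v 0 = of_bool (v ! 0) + ones_from v 1"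
    using len ones_from_unfold[of 0 v] by simp
  moreover have "hd v = v ! 0" using len by (cases v) auto
  ultimately show ?thesis unfolding pred_eca_def v_def[symmetric] by auto
qed



subsection \<open>General facts about two-party protocols\<close>

lemma cc_le_depth: "computes P g X Y \<Longrightarrow> cc g X Y \<le> depth P"
  unfolding cc_def by (rule Least_le) blast

lemma cc_attained:
  assumes "computes P g X Y"
  shows "\<exists>P'. computes P' g X Y \<and> depth P' = cc g X Y"
  using assms LeastI_ex[of "\<lambda>d. \<exists>P. computes P g X Y \<and> depth P = d"] unfolding cc_def by blast

(* One-way protocol: Alice announces the bits of a number e x < 2^j, most significant
   first (u is the prefix of e x announced so far), and Bob outputs h (e x) y. *)
fun message_protocol :: "('x \<Rightarrow> nat) \<Rightarrow> (nat \<Rightarrow> 'y \<Rightarrow> bool) \<Rightarrow> nat \<Rightarrow> nat \<Rightarrow> ('x, 'y, bool) protocol" where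
  "message_protocol e h 0 u = NodeB (h u) (Leaf False) (Leaf True)"
| "message_protocol e h (Suc j) u =
     NodeA (\<lambda>x. odd (e x div 2 ^ j)) (message_protocol e h j (2 * u)) (message_protocol e h j (2 * u + 1))"

lemma depth_message_protocol: "depth (message_protocol e h j u) = Suc j"
  by (induction j arbitrary: u) auto

lemma run_message_protocol: "e x div 2 ^ j = u \<Longrightarrow> run_protocol (message_protocol e h j u) x y = h (e x) y"
proof (induction j arbitrary: u)
  case 0
  then show ?case by simp
next
  case (Suc j)
  have "e x div 2 ^ j div 2 = u" using Suc.prems by (metis div_mult2_eq power_Suc2)
  then have "e x div 2 ^ j = (if odd (e x div 2 ^ j) then 2 * u + 1 else 2 * u)"
    by (metis even_two_times_div_two odd_two_times_div_two_succ)
  then show ?case using Suc.IH by (auto split: if_splits)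
qed

lemma one_way_protocol:
  assumes "\<forall>x\<in>X. e x < 2 ^ k" and "\<forall>x\<in>X. \<forall>y\<in>Y. g x y = h (e x) y"
  shows "computes (message_protocol e h k 0) g X Y"
  using assms by (auto simp: computes_def run_message_protocol)

lemma card_partition_by: "finite J \<Longrightarrow> card J = card {j\<in>J. P j} + card {j\<in>J. \<not> P j}"
  by (subst card_Un_disjoint[symmetric]) (auto intro: arg_cong[where f=card])

lemma add_le_two_pow_max: "(a::nat) \<le> 2 ^ p \<Longrightarrow> b \<le> 2 ^ q \<Longrightarrow> a + b \<le> 2 ^ Suc (max p q)"
proof -
  assume "a \<le> 2 ^ p" "b \<le> 2 ^ q"
  moreover have "(2::nat) ^ p \<le> 2 ^ max p q" "(2::nat) ^ q \<le> 2 ^ max p q"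
    by (simp_all add: power_increasing)
  ultimately have "a + b \<le> 2 ^ max p q + 2 ^ max p q" by linarith
  then show ?thesis by simp
qed

(* Two such indices cannot reach the same leaf,
   so a protocol has at least card J leaves. *)
lemma fooling_triangle:
  fixes P :: "('x, 'y, bool) protocol" and xs :: "nat \<Rightarrow> 'x" and ys :: "nat \<Rightarrow> 'y"
  assumes "computes P g X Y" and "finite J"
    and "\<forall>j\<in>J. xs j \<in> X \<and> ys j \<in> Y \<and> g (xs j) (ys j)"
    and "\<forall>j\<in>J. \<forall>j'\<in>J. j < j' \<longrightarrow> \<not> g (xs j) (ys j')"
  shows "card J \<le> 2 ^ depth P"
  using assms
proof (induction P arbitrary: X Y J)
  case (Leaf z)
  (* a leaf outputs the same value on (xs j, ys j) and on (xs j, ys j') *)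
  have "a = b" if "a \<in> J" "b \<in> J" for a b
  proof (rule ccontr)
    assume "a \<noteq> b"
    then consider "a < b" | "b < a" by linarith
    then show False
      using Leaf.prems that unfolding computes_def by cases (simp_all, metis, metis)
  qed
  then have "card J \<le> Suc 0" using Leaf.prems(2) by (simp add: card_le_Suc0_iff_eq)
  then show ?case by simp
next
  case (NodeA f l r)
  have "computes r g {x\<in>X. f x} Y" "computes l g {x\<in>X. \<not> f x} Y"
    using NodeA.prems(1) unfolding computes_def by auto
  then have "card {j\<in>J. f (xs j)} \<le> 2 ^ depth r" "card {j\<in>J. \<not> f (xs j)} \<le> 2 ^ depth l"
    using NodeA.IH NodeA.prems(2-4) by auto
  then have "card {j\<in>J. \<not> f (xs j)} + card {j\<in>J. f (xs j)} \<le> 2 ^ Suc (max (depth l) (depth r))"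
    by (intro add_le_two_pow_max)
  then show ?case
    using card_partition_by[OF NodeA.prems(2), of "\<lambda>j. f (xs j)"] by simp
next
  case (NodeB f l r)
  have "computes r g X {y\<in>Y. f y}" "computes l g X {y\<in>Y. \<not> f y}"
    using NodeB.prems(1) unfolding computes_def by force+
  then have "card {j\<in>J. f (ys j)} \<le> 2 ^ depth r" "card {j\<in>J. \<not> f (ys j)} \<le> 2 ^ depth l"
    using NodeB.IH NodeB.prems(2-4) by auto
  then have "card {j\<in>J. \<not> f (ys j)} + card {j\<in>J. f (ys j)} \<le> 2 ^ Suc (max (depth l) (depth r))"
    by (intro add_le_two_pow_max)
  then show ?case
    using card_partition_by[OF NodeB.prems(2), of "\<lambda>j. f (ys j)"] by simp
qed


lemma cc_word_le:
  assumes "0 < m" and "\<And>i. i < m \<Longrightarrow> cc (\<lambda>x y. g (x @ y)) {x. length x = i} {y. length y = m - i} \<le> B"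
  shows "cc_word g m \<le> B"
  unfolding cc_word_def using assms by (subst Max_le_iff) auto

lemma cc_word_ge:
  assumes "i < m"
  shows "cc (\<lambda>x y. g (x @ y)) {x. length x = i} {y. length y = m - i} \<le> cc_word g m"
  unfolding cc_word_def using assms by (intro Max_ge) auto


subsection \<open>Upper bound: a protocol with O(log n) bits\<close>

(* For a cut x @ y with |x| = i, the candidates k of min_shift n (x @ y) q split into
   those whose position q + 2k lies in x (they contribute left_min + ones_from y 0)
   and those in y (right_min).  The cap 2n+1 bounds left_min and is never smaller
   than min_shift, so it does not change the minimum. *)
definition left_min :: "nat \<Rightarrow> nat \<Rightarrow> nat \<Rightarrow> bool list \<Rightarrow> int" where
  "left_min n i q x =
     Min (insert (int (2 * n + 1)) ((\<lambda>k. ones_from x (q + 2 * k) + int k) ` {k. k \<le> n \<and> q + 2 * k < i}))"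

definition right_min :: "nat \<Rightarrow> nat \<Rightarrow> nat \<Rightarrow> bool list \<Rightarrow> int" where
  "right_min n i q y = Min ((\<lambda>k. ones_from y (q + 2 * k - i) + int k) ` {k. k \<le> n \<and> i \<le> q + 2 * k})"

lemma left_min_range: "0 \<le> left_min n i q x \<and> left_min n i q x \<le> int (2 * n + 1)"
proof
  have "left_min n i q x
      \<in> insert (int (2 * n + 1)) ((\<lambda>k. ones_from x (q + 2 * k) + int k) ` {k. k \<le> n \<and> q + 2 * k < i})"
    unfolding left_min_def by (rule Min_in) simp_all
  then show "0 \<le> left_min n i q x" using ones_from_nonneg by auto
  show "left_min n i q x \<le> int (2 * n + 1)" unfolding left_min_def by (rule Min_le) simp_all
qed

lemma min_shift_cut:
  assumes lx: "length x = i" and i: "i \<le> 2 * n" and len: "length (x @ y) \<le> 2 * n + 1"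
  shows "min_shift n (x @ y) q = min (left_min n i q x + ones_from y 0) (right_min n i q y)"
proof (rule antisym)
  have "min_shift n (x @ y) q \<le> left_min n i q x + ones_from y 0"
  proof -
    have "left_min n i q x
        \<in> insert (int (2 * n + 1)) ((\<lambda>k. ones_from x (q + 2 * k) + int k) ` {k. k \<le> n \<and> q + 2 * k < i})"
      unfolding left_min_def by (rule Min_in) simp_all
    then consider "left_min n i q x = int (2 * n + 1)"
      | k where "k \<le> n" "q + 2 * k < i" "left_min n i q x = ones_from x (q + 2 * k) + int k"
      by auto
    then show ?thesis
    proof cases
      case 1
      have "min_shift n (x @ y) q \<le> ones_from (x @ y) q" by (rule min_shift_le_ones_from)
      also have "\<dots> \<le> int (2 * n + 1)" using ones_from_le_length[of "x @ y" q] len by linarith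
      finally show ?thesis using 1 ones_from_nonneg[of y 0] by simp
    next
      case (2 k)
      then show ?thesis using min_shift_le[of k n "x @ y" q] lx by (simp add: ones_from_append)
    qed
  qed
  moreover have "min_shift n (x @ y) q \<le> right_min n i q y"
  proof -
    have "right_min n i q y \<in> (\<lambda>k. ones_from y (q + 2 * k - i) + int k) ` {k. k \<le> n \<and> i \<le> q + 2 * k}"
      unfolding right_min_def using i by (intro Min_in) auto
    then obtain k where "k \<le> n" "i \<le> q + 2 * k" "right_min n i q y = ones_from y (q + 2 * k - i) + int k"
      by auto
    then show ?thesis using min_shift_le[of k n "x @ y" q] lx by (simp add: ones_from_append)
  qed
  ultimately show "min_shift n (x @ y) q \<le> min (left_min n i q x + ones_from y 0) (right_min n i q y)"
    by simp
next
  obtain k where k: "k \<le> n" "min_shift n (x @ y) q = ones_from (x @ y) (q + 2 * k) + int k"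
    using min_shift_attained by blast
  show "min (left_min n i q x + ones_from y 0) (right_min n i q y) \<le> min_shift n (x @ y) q"
  proof (cases "q + 2 * k < i")
    case True
    then have "left_min n i q x \<le> ones_from x (q + 2 * k) + int k"
      unfolding left_min_def using k by (intro Min_le) auto
    then show ?thesis using k True lx by (simp add: ones_from_append)
  next
    case False
    then have "right_min n i q y \<le> ones_from y (q + 2 * k - i) + int k"
      unfolding right_min_def using k by (intro Min_le) auto
    then show ?thesis using k False lx by (simp add: ones_from_append)
  qed
qed

lemma pack_pair:
  fixes a b :: nat
  assumes "a < 2 ^ k" and "b < 2 ^ k"
  shows "a * 2 ^ k + b < 2 ^ (2 * k)" and "(a * 2 ^ k + b) div 2 ^ k = a" and "(a * 2 ^ k + b) mod 2 ^ k = b"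
proof -
  have "a * 2 ^ k + b < (a + 1) * 2 ^ k" using assms(2) by simp
  also have "\<dots> \<le> 2 ^ k * 2 ^ k" using assms(1) by (intro mult_right_mono) simp_all
  finally show "a * 2 ^ k + b < 2 ^ (2 * k)" by (simp add: power_add[symmetric] mult_2)
  show "(a * 2 ^ k + b) div 2 ^ k = a" "(a * 2 ^ k + b) mod 2 ^ k = b" using assms(2) by simp_all
qed

(* Bits Alice needs for one value of left_min, which lies in [0, 2n+1]. *)
definition code_bits :: "nat \<Rightarrow> nat" where
  "code_bits n = nat \<lceil>log 2 (real (2 * n + 2))\<rceil>"

lemma code_bits_bound: "2 * n + 2 \<le> 2 ^ code_bits n"
proof -
  have "real (2 * n + 2) = 2 powr (log 2 (real (2 * n + 2)))" by simp
  also have "\<dots> \<le> 2 powr (real (code_bits n))" unfolding code_bits_def by (rule powr_mono) auto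
  also have "\<dots> = real (2 ^ code_bits n)" by (simp add: powr_realpow)
  finally show ?thesis by linarith
qed

lemma code_bits_le_log: "real (code_bits n) \<le> log 2 (real (2 * n + 2)) + 1"
proof -
  have "0 \<le> log 2 (real (2 * n + 2))" by simp
  then show ?thesis unfolding code_bits_def by linarith
qed

(* Alice sends left_min n i 0 x and left_min n i 1 x; by min_shift_cut and
   pred_184_min_shift Bob can then compute the centre cell. *)
lemma pred_184_cut_protocol:
  assumes i: "i \<le> 2 * n"
  shows "\<exists>P. computes P (\<lambda>x y. pred_eca 184 n (x @ y)) {x. length x = i} {y. length y = 2 * n + 1 - i}
             \<and> depth P = Suc (2 * code_bits n)"
proof -
  define k where "k = code_bits n"
  define a where "a q x = nat (left_min n i q x)" for q x
  define e where "e x = a 0 x * 2 ^ k + a 1 x" for x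
  define h where "h v y \<longleftrightarrow>
      min (int (v div 2 ^ k) + ones_from y 0) (right_min n i 0 y)
      - min (int (v mod 2 ^ k) + ones_from y 0) (right_min n i 1 y) = 1" for v y
  have a_bound: "a q x < 2 ^ k" for q x
    using left_min_range[of n i q x] code_bits_bound[of n] unfolding a_def k_def by linarith
  have a_eq: "int (a q x) = left_min n i q x" for q x
    using left_min_range[of n i q x] unfolding a_def by simp
  have "\<forall>x\<in>{x. length x = i}. e x < 2 ^ (2 * k)"
    unfolding e_def using pack_pair(1)[OF a_bound a_bound] by blast
  moreover have "\<forall>x\<in>{x. length x = i}. \<forall>y\<in>{y. length y = 2 * n + 1 - i}.
      pred_eca 184 n (x @ y) = h (e x) y"
  proof (intro ballI)
    fix x y :: "bool list" assume "x \<in> {x. length x = i}" "y \<in> {y. length y = 2 * n + 1 - i}"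
    then have lx: "length x = i" and len: "length (x @ y) = 2 * n + 1" using i by simp_all
    show "pred_eca 184 n (x @ y) = h (e x) y"
      unfolding pred_184_min_shift[OF len] h_def e_def pack_pair[OF a_bound a_bound] a_eq
      using min_shift_cut[OF lx i] len by simp
  qed
  ultimately have "computes (message_protocol e h (2 * k) 0) (\<lambda>x y. pred_eca 184 n (x @ y))
      {x. length x = i} {y. length y = 2 * n + 1 - i}"
    by (rule one_way_protocol)
  then show ?thesis using depth_message_protocol unfolding k_def by blast
qed

lemma cc_word_184_upper: "cc_word (pred_eca 184 n) (2 * n + 1) \<le> Suc (2 * code_bits n)"
proof (rule cc_word_le)
  fix i assume "i < 2 * n + 1"
  then show "cc (\<lambda>x y. pred_eca 184 n (x @ y)) {x. length x = i} {y. length y = 2 * n + 1 - i}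
      \<le> Suc (2 * code_bits n)"
    using pred_184_cut_protocol[of i n] cc_le_depth by fastforce
qed simp



subsection \<open>Lower bound: a fooling set of size n/2 at the middle cut\<close>

lemma ones_from_replicate: "ones_from (replicate r c) p = (if c then int (r - p) else 0)"
  unfolding ones_from_def by (cases c) simp_all

(* Alice holds 0^(n-a) 1^a, Bob holds 1^(n+1-2b) 0^(2b); the block of cars in the
   middle has length a + n + 1 - 2b. *)
definition fool_left :: "nat \<Rightarrow> nat \<Rightarrow> bool list" where
  "fool_left n a = replicate (n - a) False @ replicate a True"

definition fool_right :: "nat \<Rightarrow> nat \<Rightarrow> bool list" where
  "fool_right n b = replicate (n + 1 - 2 * b) True @ replicate (2 * b) False"

(* The centre cell after n steps is occupied exactly when b \<le> a: the optimal shift k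
   in min_shift is n-b+1 resp. n-b when b \<le> a, and 0 for both q = 0, 1 otherwise. *)
lemma pred_184_fooling_pair:
  assumes a: "1 \<le> a" "2 * a \<le> n" and b: "1 \<le> b" "2 * b \<le> n"
  shows "pred_eca 184 n (fool_left n a @ fool_right n b) \<longleftrightarrow> b \<le> a"
proof -
  define w where "w = replicate (n - a) False @ replicate (a + (n + 1 - 2 * b)) True @ replicate (2 * b) False"
  have w: "fool_left n a @ fool_right n b = w"
    unfolding w_def fool_left_def fool_right_def by (simp add: replicate_add)
  have len: "length w = 2 * n + 1" unfolding w_def using a b by simp
  have count: "ones_from w p =
      (if p \<le> n - a then int (a + (n + 1 - 2 * b))
       else if p \<le> 2 * n + 1 - 2 * b then int (2 * n + 1 - 2 * b - p) else 0)" for p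
    unfolding w_def using a b by (auto simp: ones_from_append ones_from_replicate)
  show ?thesis
  proof (cases "b \<le> a")
    case True
    have "min_shift n w 0 = int (n - b + 1)"
      by (rule min_shift_eqI[where kmin = "n - b + 1"]) (use a b True in \<open>auto simp: count\<close>)
    moreover have "min_shift n w 1 = int (n - b)"
      by (rule min_shift_eqI[where kmin = "n - b"]) (use a b True in \<open>auto simp: count\<close>)
    ultimately show ?thesis using True b pred_184_min_shift[OF len] w by simp
  next
    case False
    have "min_shift n w 0 = int (a + (n + 1 - 2 * b))"
      by (rule min_shift_eqI[where kmin = 0]) (use a b False in \<open>auto simp: count\<close>)
    moreover have "min_shift n w 1 = int (a + (n + 1 - 2 * b))"
      by (rule min_shift_eqI[where kmin = 0]) (use a b False in \<open>auto simp: count\<close>)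
    ultimately show ?thesis using False pred_184_min_shift[OF len] w by simp
  qed
qed

lemma cc_word_184_lower: "n div 2 \<le> 2 ^ cc_word (pred_eca 184 n) (2 * n + 1)"
proof -
  define g where "g = (\<lambda>x y. pred_eca 184 n (x @ y))"
  define X where "X = {x :: bool list. length x = n}"
  define Y where "Y = {y :: bool list. length y = 2 * n + 1 - n}"
  obtain P where P: "computes P g X Y" "depth P = cc g X Y"
    using pred_184_cut_protocol[of n n] cc_attained unfolding g_def X_def Y_def by fastforce
  have "card {1..n div 2} \<le> 2 ^ depth P"
  proof (rule fooling_triangle[OF P(1), where xs = "fool_left n" and ys = "fool_right n"])
    show "\<forall>j\<in>{1..n div 2}. fool_left n j \<in> X \<and> fool_right n j \<in> Y \<and> g (fool_left n j) (fool_right n j)"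
      unfolding X_def Y_def g_def using pred_184_fooling_pair by (auto simp: fool_left_def fool_right_def)
    show "\<forall>j\<in>{1..n div 2}. \<forall>j'\<in>{1..n div 2}. j < j' \<longrightarrow> \<not> g (fool_left n j) (fool_right n j')"
      unfolding g_def using pred_184_fooling_pair by auto
  qed simp
  also have "\<dots> \<le> 2 ^ cc_word (pred_eca 184 n) (2 * n + 1)"
    using cc_word_ge[of n "2 * n + 1" "pred_eca 184 n"] P(2) unfolding g_def X_def Y_def
    by (intro power_increasing) simp_all
  finally show ?thesis by simp
qed


subsection \<open>Asymptotics\<close>

lemma cc_word_184_bigo:
  "(\<lambda>n::nat. real (cc_word (pred_eca 184 n) (2 * n + 1))) \<in> O(\<lambda>n. ln (real n))"
proof -
  have "real (cc_word (pred_eca 184 n) (2 * n + 1)) \<le> 2 * log 2 (real (2 * n + 2)) + 3" for n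
  proof -
    have "real (cc_word (pred_eca 184 n) (2 * n + 1)) \<le> 2 * real (code_bits n) + 1"
      using cc_word_184_upper[of n] by linarith
    then show ?thesis using code_bits_le_log[of n] by linarith
  qed
  then have "(\<lambda>n::nat. real (cc_word (pred_eca 184 n) (2 * n + 1)))
      \<in> O(\<lambda>n. 2 * log 2 (real (2 * n + 2)) + 3)"
    by (intro bigoI[where c = 1] always_eventually allI) simp
  moreover have "(\<lambda>n::nat. 2 * log 2 (real (2 * n + 2)) + 3) \<in> O(\<lambda>n. ln (real n))"
    by real_asymp
  ultimately show ?thesis by (rule landau_o.big_trans)
qed

lemma cc_word_184_bigomega:
  "(\<lambda>n::nat. real (cc_word (pred_eca 184 n) (2 * n + 1))) \<in> \<Omega>(\<lambda>n. ln (real n))"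
proof -
  have "log 2 ((real n - 1) / 2) \<le> real (cc_word (pred_eca 184 n) (2 * n + 1))" if "3 \<le> n" for n
  proof -
    have "n \<le> 2 * (n div 2) + 1" by presburger
    then have "real n \<le> real (2 * (n div 2) + 1)" by (rule of_nat_mono)
    then have "(real n - 1) / 2 \<le> real (n div 2)" by simp
    also have "\<dots> \<le> 2 ^ cc_word (pred_eca 184 n) (2 * n + 1)"
      using cc_word_184_lower[of n] by (metis of_nat_le_iff of_nat_numeral of_nat_power)
    finally have "log 2 ((real n - 1) / 2) \<le> log 2 (2 ^ cc_word (pred_eca 184 n) (2 * n + 1))"
      using that by (subst log_le_cancel_iff) auto
    then show ?thesis by (simp add: log_nat_power)
  qed
  then have "(\<lambda>n::nat. log 2 ((real n - 1) / 2)) \<in> O(\<lambda>n. real (cc_word (pred_eca 184 n) (2 * n + 1)))"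
    by (intro bigoI[where c = 1]) (auto simp: eventually_at_top_linorder intro!: exI[of _ 3])
  moreover have "(\<lambda>n::nat. ln (real n)) \<in> O(\<lambda>n. log 2 ((real n - 1) / 2))"
    by real_asymp
  ultimately show ?thesis by (simp add: bigomega_iff_bigo landau_o.big_trans)
qed

theorem mainTheorem19:
  shows "(\<lambda>n::nat. real (cc_word (pred_eca 184 n) (2 * n + 1))) \<in> \<Theta>(\<lambda>n. ln (real n))"
  using cc_word_184_bigo cc_word_184_bigomega by (rule bigthetaI)

end
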